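(* Let $(B',\boldsymbol y',\boldsymbol z',\boldsymbol q',\boldsymbol a')$ be the mutation of a groupoid seed $(B,\boldsymbol y,\boldsymbol z,\boldsymbol q,\boldsymbol a)$ in direction $k$ with sign $\varepsilon\in\{\pm1\}$. Write $\beta$ for the action of $(B,\boldsymbol y,\boldsymbol z,\boldsymbol q,\boldsymbol a)$ and $\beta'$ for the action of $(B',\boldsymbol y',\boldsymbol z',\boldsymbol q',\boldsymbol a')$. Then for every $1\le i\le n$, $\beta'(y'_i)=\beta(y'_i)$, where $\beta(y'_i)$ means the expression for $y'_i$ in terms of $\boldsymbol y$ with each $y_j$ replaced by $\beta(y_j)$. Equivalently, the seed $(B',\beta'\boldsymbol y',\boldsymbol z')$ is the mutation in direction $k$ of the seed $(B,\beta\boldsymbol y,\boldsymbol z)$.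
   Context: Fix positive integers $n$ and $d_1,\dots,d_n$. A seed over $\mathbb R_{>0}$ is a triple $(B,\boldsymbol y,\boldsymbol z)$: $B=(b_{ij})$ an $n\times n$ integer matrix with a fixed diagonal $R=\mathrm{diag}(r_1,\dots,r_n)$, $r_i\in\mathbb Z_{>0}$, such that $RB$ is skew-symmetric; $\boldsymbol y\in\mathbb R_{>0}^n$; $\boldsymbol z=(z_{i,s})_{1\le i\le n,1\le s\le d_i-1}$ with $z_{i,s}\in\mathbb R_{\ge0}$. Put $P_k(\alpha)=1+\sum_{s=1}^{d_k-1}z_{k,s}\alpha^s+\alpha^{d_k}$, and for $\varepsilon\in\{\pm1\}$, $P^\circ_k(\alpha)=P_k(\alpha^\varepsilon)\alpha^{\frac{1-\varepsilon}{2}d_k}$; $[a]_+=\max(a,0)$. Seed mutation in direction $k$ with sign $\varepsilon$: $b'_{ij}=-b_{ij}$ if $i=k$ or $j=k$, else $b'_{ij}=b_{ij}+[-\varepsilon b_{ik}d_k]_+b_{kj}+b_{ik}[\varepsilon d_kb_{kj}]_+$; $y'_k=y_k^{-1}$, $y'_i=y_iy_k^{[\varepsilon d_kb_{ki}]_+}P^\circ_k(y_k^\varepsilon)^{-b_{ki}}$ ($i\ne k$); $z'_{k,s}=z_{k,d_k-s}$, $z'_{i,s}=z_{i,s}$ ($i\ne k$). A groupoid seed is a quintuple $(B,\boldsymbol y,\boldsymbol z,\boldsymbol q,\boldsymbol a)$ with $(B,\boldsymbol y,\boldsymbol z)$ a seed over $\mathbb R_{>0}$, $\boldsymbol q=(q_1,\dots,q_n)\in\mathbb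 R^n$ and $\boldsymbol a=(a_{i,s})_{1\le i\le n,1\le s\le d_i-1}$ real. Its action is $\beta(y_j)=y_j\exp\big(\sum_{i=1}^n r_ib_{ij}y_iq_i\big)$, extended multiplicatively/compositionally to expressions in $\boldsymbol y$ (e.g. $\beta(y_k^\varepsilon)=\beta(y_k)^\varepsilon$); $\beta(B,\boldsymbol y,\boldsymbol z,\boldsymbol q,\boldsymbol a)=(B,\beta\boldsymbol y,\boldsymbol z)$. The mutation in direction $k$ with sign $\varepsilon$ is $(B',\boldsymbol y',\boldsymbol z',\boldsymbol q',\boldsymbol a')$ where $(B',\boldsymbol y',\boldsymbol z')$ is the seed mutation and $q'_k=-q_ky_k^2+\sum_{i'=1}^n[\varepsilon d_kb_{ki'}]_+q_{i'}y_{i'}y_k+\frac{y_k}{r_k}\log\frac{P^\circ_k(\beta(y_k)^\varepsilon)}{P^\circ_k(y_k^\varepsilon)}$, $q'_i=q_iy_k^{-[\varepsilon d_kb_{ki}]_+}P^\circ_k(y_k^\varepsilon)^{b_{ki}}$ ($i\ne k$), $a'_{k,s}=a_{k,d_k-s}+\frac{\varepsilon}{r_k}\int_{y_k^\varepsilon}^{\beta(y_k)^\varepsilon}\frac{u^{\varepsilon(d_k-s)-1}}{P_k(u^\varepsilon)}\,du$, $a'_{i,s}=a_{i,s}$ ($i\ne k$). *)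

theory Defs
  imports "HOL-Analysis.Analysis"
begin

text \<open>Indices are 0-based: directions i < n (the paper's 1..n).
  B :: nat => nat => int, y, q :: nat => real, z, a :: nat => nat => real,
  d, r :: nat => nat. The sign eps is an integer in {1, -1}.\<close>

definition pos_part :: "int \<Rightarrow> int" where
  "pos_part x = max x 0"

definition is_seed ::
  "nat \<Rightarrow> (nat \<Rightarrow> nat) \<Rightarrow> (nat \<Rightarrow> nat) \<Rightarrow> (nat \<Rightarrow> nat \<Rightarrow> int)
   \<Rightarrow> (nat \<Rightarrow> real) \<Rightarrow> (nat \<Rightarrow> nat \<Rightarrow> real) \<Rightarrow> bool" where
  "is_seed n d r B y z \<longleftrightarrow>
     (\<forall>i<n. 0 < d i \<and> 0 < r i \<and> 0 < y i) \<and>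
     (\<forall>i<n. \<forall>j<n. int (r i) * B i j = - (int (r j) * B j i)) \<and>
     (\<forall>i<n. \<forall>s\<in>{1..d i - 1}. 0 \<le> z i s)"

definition P_poly :: "(nat \<Rightarrow> nat) \<Rightarrow> (nat \<Rightarrow> nat \<Rightarrow> real) \<Rightarrow> nat \<Rightarrow> real \<Rightarrow> real" where
  "P_poly d z k \<alpha> = 1 + (\<Sum>s=1..d k - 1. z k s * \<alpha> ^ s) + \<alpha> ^ d k"

definition P_circ :: "(nat \<Rightarrow> nat) \<Rightarrow> (nat \<Rightarrow> nat \<Rightarrow> real) \<Rightarrow> nat \<Rightarrow> int \<Rightarrow> real \<Rightarrow> real" where
  "P_circ d z k \<epsilon> \<alpha> =
     P_poly d z k (\<alpha> powr real_of_int \<epsilon>) * \<alpha> powr ((1 - real_of_int \<epsilon>) / 2 * real (d k))"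

definition mut_B :: "(nat \<Rightarrow> nat) \<Rightarrow> (nat \<Rightarrow> nat \<Rightarrow> int) \<Rightarrow> nat \<Rightarrow> int \<Rightarrow> nat \<Rightarrow> nat \<Rightarrow> int" where
  "mut_B d B k \<epsilon> i j =
     (if i = k \<or> j = k then - B i j
      else B i j + pos_part (- \<epsilon> * B i k * int (d k)) * B k j
                 + B i k * pos_part (\<epsilon> * int (d k) * B k j))"

definition mut_y :: "(nat \<Rightarrow> nat) \<Rightarrow> (nat \<Rightarrow> nat \<Rightarrow> int) \<Rightarrow> (nat \<Rightarrow> nat \<Rightarrow> real) \<Rightarrow> nat \<Rightarrow> int
    \<Rightarrow> (nat \<Rightarrow> real) \<Rightarrow> nat \<Rightarrow> real" where
  "mut_y d B z k \<epsilon> y i =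
     (if i = k then inverse (y k)
      else y i * y k powr real_of_int (pos_part (\<epsilon> * int (d k) * B k i))
               * P_circ d z k \<epsilon> (y k powr real_of_int \<epsilon>) powr real_of_int (- B k i))"

definition mut_z :: "(nat \<Rightarrow> nat) \<Rightarrow> (nat \<Rightarrow> nat \<Rightarrow> real) \<Rightarrow> nat \<Rightarrow> nat \<Rightarrow> nat \<Rightarrow> real" where
  "mut_z d z k i s = (if i = k then z k (d k - s) else z i s)"

definition gaction :: "nat \<Rightarrow> (nat \<Rightarrow> nat) \<Rightarrow> (nat \<Rightarrow> nat \<Rightarrow> int) \<Rightarrow> (nat \<Rightarrow> real) \<Rightarrow> (nat \<Rightarrow> real)
    \<Rightarrow> nat \<Rightarrow> real" where
  "gaction n r B y q j = y j * exp (\<Sum>i<n. real (r i) * real_of_int (B i j) * y i * q i)"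

definition mut_q :: "nat \<Rightarrow> (nat \<Rightarrow> nat) \<Rightarrow> (nat \<Rightarrow> nat) \<Rightarrow> (nat \<Rightarrow> nat \<Rightarrow> int) \<Rightarrow> (nat \<Rightarrow> real)
    \<Rightarrow> (nat \<Rightarrow> nat \<Rightarrow> real) \<Rightarrow> (nat \<Rightarrow> real) \<Rightarrow> nat \<Rightarrow> int \<Rightarrow> nat \<Rightarrow> real" where
  "mut_q n d r B y z q k \<epsilon> i =
     (if i = k then
        - q k * (y k)\<^sup>2
        + (\<Sum>i'<n. real_of_int (pos_part (\<epsilon> * int (d k) * B k i')) * q i' * y i' * y k)
        + y k / real (r k)
          * ln (P_circ d z k \<epsilon> (gaction n r B y q k powr real_of_int \<epsilon>)
                / P_circ d z k \<epsilon> (y k powr real_of_int \<epsilon>))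
      else q i * y k powr real_of_int (- pos_part (\<epsilon> * int (d k) * B k i))
               * P_circ d z k \<epsilon> (y k powr real_of_int \<epsilon>) powr real_of_int (B k i))"

definition oint :: "real \<Rightarrow> real \<Rightarrow> (real \<Rightarrow> real) \<Rightarrow> real" where
  "oint a b f = (if a \<le> b then integral {a..b} f else - integral {b..a} f)"

definition mut_a :: "nat \<Rightarrow> (nat \<Rightarrow> nat) \<Rightarrow> (nat \<Rightarrow> nat) \<Rightarrow> (nat \<Rightarrow> nat \<Rightarrow> int) \<Rightarrow> (nat \<Rightarrow> real)
    \<Rightarrow> (nat \<Rightarrow> nat \<Rightarrow> real) \<Rightarrow> (nat \<Rightarrow> real) \<Rightarrow> (nat \<Rightarrow> nat \<Rightarrow> real) \<Rightarrow> nat \<Rightarrow> int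
    \<Rightarrow> nat \<Rightarrow> nat \<Rightarrow> real" where
  "mut_a n d r B y z q a k \<epsilon> i s =
     (if i = k then
        a k (d k - s) + real_of_int \<epsilon> / real (r k)
          * oint (y k powr real_of_int \<epsilon>) (gaction n r B y q k powr real_of_int \<epsilon>)
              (\<lambda>u. u powr (real_of_int \<epsilon> * (real (d k) - real s) - 1)
                    / P_poly d z k (u powr real_of_int \<epsilon>))
      else a i s)"

definition gseed_mut ::
  "nat \<Rightarrow> (nat \<Rightarrow> nat) \<Rightarrow> (nat \<Rightarrow> nat) \<Rightarrow> nat \<Rightarrow> int
   \<Rightarrow> (nat \<Rightarrow> nat \<Rightarrow> int) \<times> (nat \<Rightarrow> real) \<times> (nat \<Rightarrow> nat \<Rightarrow> real) \<times> (nat \<Rightarrow> real) \<times> (nat \<Rightarrow> nat \<Rightarrow> real)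
   \<Rightarrow> (nat \<Rightarrow> nat \<Rightarrow> int) \<times> (nat \<Rightarrow> real) \<times> (nat \<Rightarrow> nat \<Rightarrow> real) \<times> (nat \<Rightarrow> real) \<times> (nat \<Rightarrow> nat \<Rightarrow> real)"
  where
  "gseed_mut n d r k \<epsilon> S = (case S of (B, y, z, q, a) \<Rightarrow>
     (mut_B d B k \<epsilon>, mut_y d B z k \<epsilon> y, mut_z d z k, mut_q n d r B y z q k \<epsilon>,
      mut_a n d r B y z q a k \<epsilon>))"

end

theory Submission
  imports Defs
begin

(* With w_i = y_i q_i the action reads beta(y_j) = y_j exp S_j, where S_j = sum_i r_i b_ij w_i.
   Mutation leaves w_i unchanged for i ~= k, and q'_k is chosen precisely so that
     w'_k = - w_k + sum_i [eps d_k b_ki]_+ w_i + log (Pcirc_k(beta(y_k)^eps) / Pcirc_k(y_k^eps)) / r_k.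
   Substituting this into S'_j = sum_i r_i b'_ij w'_i and using skew-symmetrizability in the form
   r_i [-eps b_ik d_k]_+ = r_k [eps d_k b_ki]_+ gives S'_k = - S_k and, for j ~= k,
     S'_j = S_j + [eps d_k b_kj]_+ S_k - b_kj log (Pcirc_k(beta(y_k)^eps) / Pcirc_k(y_k^eps)),
   which is exactly the factor by which the mutation formula for y'_j changes when y is replaced
   by beta y. *)

lemma pos_part_mult_nonneg: "0 \<le> c \<Longrightarrow> c * pos_part x = pos_part (c * x)"
  unfolding pos_part_def by (simp add: max_def mult_le_0_iff)

lemma pos_part_skew:
  assumes "int (r i) * B i k = - (int (r k) * B k i)"
  shows "int (r i) * pos_part (- \<epsilon> * B i k * int (d k)) = int (r k) * pos_part (\<epsilon> * int (d k) * B k i)"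
proof -
  have "int (r i) * (- \<epsilon> * B i k * int (d k)) = - \<epsilon> * int (d k) * (int (r i) * B i k)"
    by (simp add: algebra_simps)
  also have "\<dots> = int (r k) * (\<epsilon> * int (d k) * B k i)"
    using assms by (simp add: algebra_simps)
  finally show ?thesis by (simp add: pos_part_mult_nonneg)
qed

lemma P_poly_pos:
  assumes "\<forall>s\<in>{1..d k - 1}. 0 \<le> z k s" "0 < \<alpha>"
  shows "0 < P_poly d z k \<alpha>"
proof -
  have "0 \<le> (\<Sum>s=1..d k - 1. z k s * \<alpha> ^ s)"
    using assms by (intro sum_nonneg) auto
  moreover have "0 < \<alpha> ^ d k" using assms by simp
  ultimately show ?thesis unfolding P_poly_def by linarith
qed

lemma P_circ_pos:
  assumes "\<forall>s\<in>{1..d k - 1}. 0 \<le> z k s" "0 < \<alpha>"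
  shows "0 < P_circ d z k \<epsilon> \<alpha>"
  unfolding P_circ_def using P_poly_pos[of d k z, OF assms(1)] assms(2) by simp

definition action_exponent :: "nat \<Rightarrow> (nat \<Rightarrow> nat) \<Rightarrow> (nat \<Rightarrow> nat \<Rightarrow> int) \<Rightarrow> (nat \<Rightarrow> real) \<Rightarrow> nat \<Rightarrow> real"
  where "action_exponent n r B w j = (\<Sum>i<n. real (r i) * real_of_int (B i j) * w i)"

lemma gaction_action_exponent:
  "gaction n r B y q j = y j * exp (action_exponent n r B (\<lambda>i. y i * q i) j)"
  unfolding gaction_def action_exponent_def by (simp add: mult.assoc)

lemma action_exponent_mut_B_direction:
  assumes "k < n" "B k k = 0" and w': "\<And>i. i < n \<Longrightarrow> i \<noteq> k \<Longrightarrow> w' i = w i"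
  shows "action_exponent n r (mut_B d B k \<epsilon>) w' k = - action_exponent n r B w k"
proof -
  have "real (r i) * real_of_int (mut_B d B k \<epsilon> i k) * w' i = - (real (r i) * real_of_int (B i k) * w i)"
    if "i < n" for i
    using that w' assms(2) by (cases "i = k") (auto simp: mut_B_def)
  then show ?thesis
    unfolding action_exponent_def by (simp add: sum_negf[symmetric])
qed

lemma action_exponent_mut_B:
  fixes \<epsilon> :: int and d :: "nat \<Rightarrow> nat"
  assumes "k < n" "j \<noteq> k" "0 < r k"
    and skew: "\<And>i. i < n \<Longrightarrow> int (r i) * B i k = - (int (r k) * B k i)"
    and w': "\<And>i. i < n \<Longrightarrow> i \<noteq> k \<Longrightarrow> w' i = w i"
  defines "c \<equiv> \<lambda>i. real_of_int (pos_part (\<epsilon> * int (d k) * B k i))"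
  shows "action_exponent n r (mut_B d B k \<epsilon>) w' j
    = action_exponent n r B w j + c j * action_exponent n r B w k
      - real (r k) * real_of_int (B k j) * (w' k + w k - (\<Sum>i<n. c i * w i))"
proof -
  have "B k k = 0" using skew[OF \<open>k < n\<close>] \<open>0 < r k\<close> by simp
  then have "c k = 0" by (simp add: c_def pos_part_def)
  have "real (r i) * real_of_int (mut_B d B k \<epsilon> i j) * w' i
      = real (r i) * real_of_int (B i j) * w i + c j * (real (r i) * real_of_int (B i k) * w i)
        + real (r k) * real_of_int (B k j) * (c i * w i)
        - (if i = k then real (r k) * real_of_int (B k j) * (w' k + w k) else 0)"
    if "i < n" for i
  proof (cases "i = k")
    case True
    then show ?thesis using \<open>B k k = 0\<close> \<open>c k = 0\<close> \<open>j \<noteq> k\<close> by (simp add: mut_B_def algebra_simps)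
  next
    case False
    have "real (r i) * real_of_int (pos_part (- \<epsilon> * B i k * int (d k))) = real (r k) * c i"
      using pos_part_skew[OF skew[OF \<open>i < n\<close>], of \<epsilon> d] unfolding c_def by (metis of_int_mult of_int_of_nat_eq)
    then show ?thesis using False \<open>j \<noteq> k\<close> w'[OF \<open>i < n\<close> False]
      by (simp add: mut_B_def c_def algebra_simps)
  qed
  then have "action_exponent n r (mut_B d B k \<epsilon>) w' j
      = (\<Sum>i<n. real (r i) * real_of_int (B i j) * w i + c j * (real (r i) * real_of_int (B i k) * w i)
          + real (r k) * real_of_int (B k j) * (c i * w i)
          - (if i = k then real (r k) * real_of_int (B k j) * (w' k + w k) else 0))"
    unfolding action_exponent_def by (intro sum.cong) auto
  also have "\<dots> = action_exponent n r B w j + c j * action_exponent n r B w k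
      - real (r k) * real_of_int (B k j) * (w' k + w k - (\<Sum>i<n. c i * w i))"
    using \<open>k < n\<close> by (simp add: action_exponent_def sum.distrib sum_subtractf sum_distrib_left algebra_simps)
  finally show ?thesis .
qed

lemma mut_y_mut_q_off_direction:
  assumes "i \<noteq> k" "0 < y k" "\<forall>s\<in>{1..d k - 1}. 0 \<le> z k s"
  shows "mut_y d B z k \<epsilon> y i * mut_q n d r B y z q k \<epsilon> i = y i * q i"
proof -
  define c where "c = real_of_int (pos_part (\<epsilon> * int (d k) * B k i))"
  define L where "L = P_circ d z k \<epsilon> (y k powr real_of_int \<epsilon>)"
  have "0 < L" unfolding L_def using P_circ_pos[of d k z, OF assms(3)] \<open>0 < y k\<close> by simp
  have "mut_y d B z k \<epsilon> y i * mut_q n d r B y z q k \<epsilon> i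
      = y i * q i * (y k powr c * y k powr (- c))
        * (L powr real_of_int (- B k i) * L powr real_of_int (B k i))"
    using \<open>i \<noteq> k\<close> unfolding mut_y_def mut_q_def c_def L_def by (simp add: ac_simps)
  also have "\<dots> = y i * q i"
    using \<open>0 < y k\<close> \<open>0 < L\<close> by (simp add: powr_add[symmetric])
  finally show ?thesis .
qed

lemma mut_y_mut_q_direction:
  assumes "0 < y k"
  shows "mut_y d B z k \<epsilon> y k * mut_q n d r B y z q k \<epsilon> k
    = - (y k * q k) + (\<Sum>i<n. real_of_int (pos_part (\<epsilon> * int (d k) * B k i)) * (y i * q i))
      + ln (P_circ d z k \<epsilon> (gaction n r B y q k powr real_of_int \<epsilon>)
            / P_circ d z k \<epsilon> (y k powr real_of_int \<epsilon>)) / real (r k)"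
  using assms unfolding mut_y_def mut_q_def
  by (simp add: field_simps power2_eq_square sum_distrib_left sum_divide_distrib)

lemma mut_y_rescale_direction:
  "mut_y d B z k \<epsilon> (\<lambda>i. y i * exp (t i)) k = mut_y d B z k \<epsilon> y k * exp (- t k)"
  unfolding mut_y_def by (simp add: exp_minus)

lemma mut_y_rescale:
  fixes t :: "nat \<Rightarrow> real"
  assumes "j \<noteq> k" "0 < y k" "\<forall>s\<in>{1..d k - 1}. 0 \<le> z k s"
  defines "Y \<equiv> \<lambda>i. y i * exp (t i)"
  shows "mut_y d B z k \<epsilon> Y j = mut_y d B z k \<epsilon> y j
    * exp (t j + real_of_int (pos_part (\<epsilon> * int (d k) * B k j)) * t k
           - real_of_int (B k j) * (ln (P_circ d z k \<epsilon> (Y k powr real_of_int \<epsilon>))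
                                     - ln (P_circ d z k \<epsilon> (y k powr real_of_int \<epsilon>))))"
proof -
  define c where "c = real_of_int (pos_part (\<epsilon> * int (d k) * B k j))"
  define L where "L = P_circ d z k \<epsilon> (y k powr real_of_int \<epsilon>)"
  define L\<^sub>Y where "L\<^sub>Y = P_circ d z k \<epsilon> (Y k powr real_of_int \<epsilon>)"
  have "0 < Y k" unfolding Y_def using \<open>0 < y k\<close> by simp
  then have "0 < L\<^sub>Y" "0 < L"
    unfolding L\<^sub>Y_def L_def using P_circ_pos[of d k z, OF assms(3)] \<open>0 < y k\<close> by simp_all
  have "mut_y d B z k \<epsilon> Y j = y j * exp (t j) * (y k * exp (t k)) powr c * L\<^sub>Y powr real_of_int (- B k j)"
    using \<open>j \<noteq> k\<close> unfolding mut_y_def c_def L\<^sub>Y_def by (simp add: Y_def)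
  moreover have "mut_y d B z k \<epsilon> y j = y j * y k powr c * L powr real_of_int (- B k j)"
    using \<open>j \<noteq> k\<close> unfolding mut_y_def c_def L_def by simp
  ultimately show ?thesis
    using \<open>0 < y k\<close> \<open>0 < L\<^sub>Y\<close> \<open>0 < L\<close>
    unfolding c_def[symmetric] L_def[symmetric] L\<^sub>Y_def[symmetric]
    by (simp add: powr_def ln_mult exp_add exp_diff exp_minus_inverse field_simps)
qed

lemma seed_skew_column:
  "is_seed n d r B y z \<Longrightarrow> k < n \<Longrightarrow> i < n \<Longrightarrow> int (r i) * B i k = - (int (r k) * B k i)"
  unfolding is_seed_def by blast

lemma mut_action_exponent_direction:
  assumes seed: "is_seed n d r B y z" and "k < n"
  shows "action_exponent n r (mut_B d B k \<epsilon>) (\<lambda>i. mut_y d B z k \<epsilon> y i * mut_q n d r B y z q k \<epsilon> i) k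
    = - action_exponent n r B (\<lambda>i. y i * q i) k"
proof (rule action_exponent_mut_B_direction[OF \<open>k < n\<close>])
  have "0 < r k" using seed \<open>k < n\<close> unfolding is_seed_def by blast
  then show "B k k = 0" using seed_skew_column[OF seed \<open>k < n\<close> \<open>k < n\<close>] by simp
  show "mut_y d B z k \<epsilon> y i * mut_q n d r B y z q k \<epsilon> i = y i * q i" if "i < n" "i \<noteq> k" for i
    using seed \<open>k < n\<close> unfolding is_seed_def by (intro mut_y_mut_q_off_direction[OF \<open>i \<noteq> k\<close>]) blast+
qed

lemma mut_action_exponent:
  fixes q :: "nat \<Rightarrow> real"
  assumes seed: "is_seed n d r B y z" and "k < n" "j \<noteq> k"
  defines "S \<equiv> action_exponent n r B (\<lambda>i. y i * q i)"
  shows "action_exponent n r (mut_B d B k \<epsilon>) (\<lambda>i. mut_y d B z k \<epsilon> y i * mut_q n d r B y z q k \<epsilon> i) j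
    = S j + real_of_int (pos_part (\<epsilon> * int (d k) * B k j)) * S k
      - real_of_int (B k j) * (ln (P_circ d z k \<epsilon> (gaction n r B y q k powr real_of_int \<epsilon>))
                                - ln (P_circ d z k \<epsilon> (y k powr real_of_int \<epsilon>)))"
proof -
  have "0 < y k" "0 < r k" and z: "\<forall>s\<in>{1..d k - 1}. 0 \<le> z k s"
    using seed \<open>k < n\<close> unfolding is_seed_def by blast+
  define L where "L = P_circ d z k \<epsilon> (y k powr real_of_int \<epsilon>)"
  define L\<^sub>Y where "L\<^sub>Y = P_circ d z k \<epsilon> (gaction n r B y q k powr real_of_int \<epsilon>)"
  have "0 < gaction n r B y q k" using \<open>0 < y k\<close> by (simp add: gaction_def)
  then have "0 < L" "0 < L\<^sub>Y"
    using P_circ_pos[of d k z, OF z] \<open>0 < y k\<close> unfolding L_def L\<^sub>Y_def by simp_all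
  then have "mut_y d B z k \<epsilon> y k * mut_q n d r B y z q k \<epsilon> k + y k * q k
      - (\<Sum>i<n. real_of_int (pos_part (\<epsilon> * int (d k) * B k i)) * (y i * q i))
      = (ln L\<^sub>Y - ln L) / real (r k)"
    using mut_y_mut_q_direction[of y k d B z \<epsilon> n r q] \<open>0 < y k\<close>
    unfolding L_def L\<^sub>Y_def by (simp add: ln_div)
  moreover have "action_exponent n r (mut_B d B k \<epsilon>) (\<lambda>i. mut_y d B z k \<epsilon> y i * mut_q n d r B y z q k \<epsilon> i) j
      = S j + real_of_int (pos_part (\<epsilon> * int (d k) * B k j)) * S k
        - real (r k) * real_of_int (B k j) * (mut_y d B z k \<epsilon> y k * mut_q n d r B y z q k \<epsilon> k + y k * q k
          - (\<Sum>i<n. real_of_int (pos_part (\<epsilon> * int (d k) * B k i)) * (y i * q i)))"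
    unfolding S_def
  proof (rule action_exponent_mut_B[OF \<open>k < n\<close> \<open>j \<noteq> k\<close>])
    show "0 < r k" by fact
    show "int (r i) * B i k = - (int (r k) * B k i)" if "i < n" for i
      using seed_skew_column[OF seed \<open>k < n\<close> that] .
    show "mut_y d B z k \<epsilon> y i * mut_q n d r B y z q k \<epsilon> i = y i * q i" if "i < n" "i \<noteq> k" for i
      using mut_y_mut_q_off_direction[OF \<open>i \<noteq> k\<close>] \<open>0 < y k\<close> z by blast
  qed
  ultimately show ?thesis
    unfolding L_def L\<^sub>Y_def using \<open>0 < r k\<close> by simp
qed

theorem mainTheorem2:
  fixes n k :: nat and d r :: "nat \<Rightarrow> nat" and \<epsilon> :: int
    and B :: "nat \<Rightarrow> nat \<Rightarrow> int" and y q :: "nat \<Rightarrow> real" and z a :: "nat \<Rightarrow> nat \<Rightarrow> real"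
    and B' :: "nat \<Rightarrow> nat \<Rightarrow> int" and y' q' :: "nat \<Rightarrow> real" and z' a' :: "nat \<Rightarrow> nat \<Rightarrow> real"
  assumes seed: "is_seed n d r B y z"
    and k: "k < n"
    and eps: "\<epsilon> = 1 \<or> \<epsilon> = -1"
    and mut: "gseed_mut n d r k \<epsilon> (B, y, z, q, a) = (B', y', z', q', a')"
  shows "\<forall>i<n. gaction n r B' y' q' i = mut_y d B z k \<epsilon> (gaction n r B y q) i"
proof (intro allI impI)
  fix j assume "j < n"
  have B': "B' = mut_B d B k \<epsilon>" and y': "y' = mut_y d B z k \<epsilon> y"
    and q': "q' = mut_q n d r B y z q k \<epsilon>"
    using mut by (simp_all add: gseed_mut_def)
  have "0 < y k" and z: "\<forall>s\<in>{1..d k - 1}. 0 \<le> z k s"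
    using seed k unfolding is_seed_def by blast+
  define S where "S = action_exponent n r B (\<lambda>i. y i * q i)"
  have action: "gaction n r B y q = (\<lambda>i. y i * exp (S i))"
    unfolding S_def by (intro ext gaction_action_exponent)
  have action': "gaction n r B' y' q' j = y' j * exp (action_exponent n r B' (\<lambda>i. y' i * q' i) j)"
    by (rule gaction_action_exponent)
  show "gaction n r B' y' q' j = mut_y d B z k \<epsilon> (gaction n r B y q) j"
  proof (cases "j = k")
    case True
    then show ?thesis
      using action' mut_action_exponent_direction[OF seed k]
      by (simp add: B' y' q' S_def action mut_y_rescale_direction)
  next
    case False
    then show ?thesis
      using action' mut_action_exponent[OF seed k False]
        mut_y_rescale[where y = y and d = d and z = z, OF False \<open>0 < y k\<close> z]
      by (simp add: B' y' q' S_def action)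
  qed
qed

end
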